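(* Consider the setting described in the context. If $Q_{t,k}\ge0$, $R_{t,k}>0$ and $G_t\ge0$ for all $k\in\mathbb{T}_t$, $t\in\mathbb{T}$, then Problem (LQ) admits a unique linear feedback equilibrium strategy $\Phi$.
   Context: Let $N$ be a positive integer, $\mathbb{T}=\{0,1,\dots,N-1\}$, $\mathbb{T}_t=\{t,\dots,N-1\}$. On a probability space $(\Omega,\mathcal{F},P)$, $\{w_k\}$ is a scalar martingale difference sequence with $\mathbb{E}[w_{k+1}\mid\mathcal{F}_k]=0$ and $\mathbb{E}[w_{k+1}^2\mid\mathcal{F}_k]=1$ for $k\ge0$, where $\mathcal{F}_k=\sigma\{x_0,w_l,\ l=0,\dots,k\}$ and $\mathcal{F}_{-1}=\{\emptyset,\Omega\}$. $L^2_{\mathcal{F}}(\mathbb{T}_t;\mathbb{R}^m)$ is the set of $\mathbb{R}^m$-valued processes $\{\nu_k,k\in\mathbb{T}_t\}$ with each $\nu_k$ $\mathcal{F}_{k-1}$-measurable and $\sum_k\mathbb{E}|\nu_k|^2<\infty$; $L^2_{\mathcal{F}}(k;\mathcal{H})$ is the set of square-integrable $\mathcal{F}_{k-1}$-measurable $\mathcal{H}$-valued random variables. For each $t\in\mathbb{T}$, $k\in\mathbb{T}_t$, let $A_{t,k},C_{t,k}\in\mathbb{R}^{n\times n}$, $B_{t,k},D_{t,k}\in\mathbb{R}^{n\times m}$ be deterministic and $Q_{t,k}\in\mathbb{R}^{n\times n}$, $R_{t,k}\in\mathbb{R}^{m\times m}$, $G_t\in\mathbb{R}^{n\times n}$ deterministic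 symmetric. For $t\in\mathbb{T}$, $y\in L^2_{\mathcal{F}}(t;\mathbb{R}^n)$, $u\in L^2_{\mathcal{F}}(\mathbb{T}_t;\mathbb{R}^m)$, the state $X^t$ solves $X^t_{k+1}=A_{t,k}X^t_k+B_{t,k}u_k+(C_{t,k}X^t_k+D_{t,k}u_k)w_k$, $X^t_t=y$, and $J(t,y;u)=\sum_{k=t}^{N-1}\mathbb{E}[(X^t_k)^TQ_{t,k}X^t_k+u_k^TR_{t,k}u_k]+\mathbb{E}[(X^t_N)^TG_tX^t_N]$ (Problem (LQ) is to minimize it). $\Phi=\{\Phi_0,\dots,\Phi_{N-1}\}$, $\Phi_t\in\mathbb{R}^{m\times n}$, is a linear feedback equilibrium strategy of Problem (LQ) if for every $(t,x)\in\mathbb{T}\times\mathbb{R}^n$, $k\in\mathbb{T}_t$ and $u_k\in L^2_{\mathcal{F}}(k;\mathbb{R}^m)$, $$J\big(k,X^{t,x,*}_k;(\Phi_\ell X^{k,\Phi}_\ell)_{\ell\in\mathbb{T}_k}\big)\le J\big(k,X^{t,x,*}_k;(u_k,(\Phi_\ell X^{k,u_k,\Phi}_\ell)_{\ell\in\mathbb{T}_{k+1}})\big),$$ where $X^{t,x,*}_{k+1}=(A_{k,k}+B_{k,k}\Phi_k)X^{t,x,*}_k+(C_{k,k}+D_{k,k}\Phi_k)X^{t,x,*}_kw_k$, $X^{t,x,*}_t=x$; $X^{k,\Phi}_{\ell+1}=(A_{k,\ell}+B_{k,\ell}\Phi_\ell)X^{k,\Phi}_\ell+(C_{k,\ell}+D_{k,\ell}\Phi_\ell)X^{k,\Phi}_\ell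 w_\ell$ ($\ell\in\mathbb{T}_k$), $X^{k,\Phi}_k=X^{t,x,*}_k$; and $X^{k,u_k,\Phi}_k=X^{t,x,*}_k$, $X^{k,u_k,\Phi}_{k+1}=A_{k,k}X^{k,u_k,\Phi}_k+B_{k,k}u_k+(C_{k,k}X^{k,u_k,\Phi}_k+D_{k,k}u_k)w_k$, $X^{k,u_k,\Phi}_{\ell+1}=(A_{k,\ell}+B_{k,\ell}\Phi_\ell)X^{k,u_k,\Phi}_\ell+(C_{k,\ell}+D_{k,\ell}\Phi_\ell)X^{k,u_k,\Phi}_\ell w_\ell$ for $\ell\in\mathbb{T}_{k+1}$. *)

theory Defs
  imports "HOL-Analysis.Analysis" "HOL-Probability.Probability"
begin

definition psd_mat :: "real^'n^'n \<Rightarrow> bool" where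
  "psd_mat P \<longleftrightarrow> (\<forall>x. 0 \<le> x \<bullet> (P *v x))"

definition pd_mat :: "real^'n^'n \<Rightarrow> bool" where
  "pd_mat P \<longleftrightarrow> (\<forall>x. x \<noteq> 0 \<longrightarrow> 0 < x \<bullet> (P *v x))"

text \<open>Filtration: Ffilt k = F_k = sigma{x0, w_0..w_k}; Fpre k = F_(k-1), with F_(-1) trivial.\<close>
definition Ffilt :: "'w measure \<Rightarrow> ('w \<Rightarrow> 'a::topological_space) \<Rightarrow> (nat \<Rightarrow> 'w \<Rightarrow> real) \<Rightarrow> nat \<Rightarrow> 'w measure" where
  "Ffilt M x0 w k = sigma (space M)
     ({x0 -` S \<inter> space M | S. S \<in> sets borel} \<union>
      (\<Union>l\<in>{..k}. {w l -` S \<inter> space M | S. S \<in> sets borel}))"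

definition Fpre :: "'w measure \<Rightarrow> ('w \<Rightarrow> 'a::topological_space) \<Rightarrow> (nat \<Rightarrow> 'w \<Rightarrow> real) \<Rightarrow> nat \<Rightarrow> 'w measure" where
  "Fpre M x0 w k = (if k = 0 then sigma (space M) {} else Ffilt M x0 w (k - 1))"

text \<open>State of system t started at time t with (random) value y under control process u;
  stateX ... t y u j is X^t_(t+j).\<close>
fun stateX :: "(nat \<Rightarrow> nat \<Rightarrow> real^'n^'n) \<Rightarrow> (nat \<Rightarrow> nat \<Rightarrow> real^'m^'n) \<Rightarrow>
    (nat \<Rightarrow> nat \<Rightarrow> real^'n^'n) \<Rightarrow> (nat \<Rightarrow> nat \<Rightarrow> real^'m^'n) \<Rightarrow> (nat \<Rightarrow> 'w \<Rightarrow> real) \<Rightarrow>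
    nat \<Rightarrow> ('w \<Rightarrow> real^'n) \<Rightarrow> (nat \<Rightarrow> 'w \<Rightarrow> real^'m) \<Rightarrow> nat \<Rightarrow> 'w \<Rightarrow> real^'n" where
  "stateX A B C D w t y u 0 \<omega> = y \<omega>"
| "stateX A B C D w t y u (Suc j) \<omega> =
     (let k = t + j; x = stateX A B C D w t y u j \<omega>; c = u k \<omega> in
      A t k *v x + B t k *v c + w k \<omega> *\<^sub>R (C t k *v x + D t k *v c))"

definition costJ :: "'w measure \<Rightarrow> nat \<Rightarrow> (nat \<Rightarrow> nat \<Rightarrow> real^'n^'n) \<Rightarrow> (nat \<Rightarrow> nat \<Rightarrow> real^'m^'n) \<Rightarrow>
    (nat \<Rightarrow> nat \<Rightarrow> real^'n^'n) \<Rightarrow> (nat \<Rightarrow> nat \<Rightarrow> real^'m^'n) \<Rightarrow>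
    (nat \<Rightarrow> nat \<Rightarrow> real^'n^'n) \<Rightarrow> (nat \<Rightarrow> nat \<Rightarrow> real^'m^'m) \<Rightarrow> (nat \<Rightarrow> real^'n^'n) \<Rightarrow>
    (nat \<Rightarrow> 'w \<Rightarrow> real) \<Rightarrow> nat \<Rightarrow> ('w \<Rightarrow> real^'n) \<Rightarrow> (nat \<Rightarrow> 'w \<Rightarrow> real^'m) \<Rightarrow> real" where
  "costJ M N A B C D Q R G w t y u =
     (\<Sum>k\<in>{t..<N}. integral\<^sup>L M (\<lambda>\<omega>.
         stateX A B C D w t y u (k - t) \<omega> \<bullet> (Q t k *v stateX A B C D w t y u (k - t) \<omega>)
         + u k \<omega> \<bullet> (R t k *v u k \<omega>)))
     + integral\<^sup>L M (\<lambda>\<omega>. stateX A B C D w t y u (N - t) \<omega> \<bullet> (G t *v stateX A B C D w t y u (N - t) \<omega>))"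

text \<open>X^{t,x,*}: equilibrium state started at time t from deterministic x; eqX ... t x j = X^{t,x,*}_(t+j).\<close>
fun eqX :: "(nat \<Rightarrow> nat \<Rightarrow> real^'n^'n) \<Rightarrow> (nat \<Rightarrow> nat \<Rightarrow> real^'m^'n) \<Rightarrow>
    (nat \<Rightarrow> nat \<Rightarrow> real^'n^'n) \<Rightarrow> (nat \<Rightarrow> nat \<Rightarrow> real^'m^'n) \<Rightarrow> (nat \<Rightarrow> 'w \<Rightarrow> real) \<Rightarrow>
    (nat \<Rightarrow> real^'n^'m) \<Rightarrow> nat \<Rightarrow> real^'n \<Rightarrow> nat \<Rightarrow> 'w \<Rightarrow> real^'n" where
  "eqX A B C D w \<Phi> t x 0 \<omega> = x"
| "eqX A B C D w \<Phi> t x (Suc j) \<omega> =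
     (let k = t + j; X = eqX A B C D w \<Phi> t x j \<omega> in
      (A k k + B k k ** \<Phi> k) *v X + w k \<omega> *\<^sub>R ((C k k + D k k ** \<Phi> k) *v X))"

text \<open>X^{k,\<Phi>}: closed-loop state of system k from time k with initial value y; clX ... k y j = X^{k,\<Phi>}_(k+j).\<close>
fun clX :: "(nat \<Rightarrow> nat \<Rightarrow> real^'n^'n) \<Rightarrow> (nat \<Rightarrow> nat \<Rightarrow> real^'m^'n) \<Rightarrow>
    (nat \<Rightarrow> nat \<Rightarrow> real^'n^'n) \<Rightarrow> (nat \<Rightarrow> nat \<Rightarrow> real^'m^'n) \<Rightarrow> (nat \<Rightarrow> 'w \<Rightarrow> real) \<Rightarrow>
    (nat \<Rightarrow> real^'n^'m) \<Rightarrow> nat \<Rightarrow> ('w \<Rightarrow> real^'n) \<Rightarrow> nat \<Rightarrow> 'w \<Rightarrow> real^'n" where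
  "clX A B C D w \<Phi> k y 0 \<omega> = y \<omega>"
| "clX A B C D w \<Phi> k y (Suc j) \<omega> =
     (let l = k + j; X = clX A B C D w \<Phi> k y j \<omega> in
      (A k l + B k l ** \<Phi> l) *v X + w l \<omega> *\<^sub>R ((C k l + D k l ** \<Phi> l) *v X))"

text \<open>X^{k,u_k,\<Phi>}: state of system k, control v at time k, closed loop afterwards;
  pX ... k y v j = X^{k,u_k,\<Phi>}_(k+j).\<close>
fun pX :: "(nat \<Rightarrow> nat \<Rightarrow> real^'n^'n) \<Rightarrow> (nat \<Rightarrow> nat \<Rightarrow> real^'m^'n) \<Rightarrow>
    (nat \<Rightarrow> nat \<Rightarrow> real^'n^'n) \<Rightarrow> (nat \<Rightarrow> nat \<Rightarrow> real^'m^'n) \<Rightarrow> (nat \<Rightarrow> 'w \<Rightarrow> real) \<Rightarrow>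
    (nat \<Rightarrow> real^'n^'m) \<Rightarrow> nat \<Rightarrow> ('w \<Rightarrow> real^'n) \<Rightarrow> ('w \<Rightarrow> real^'m) \<Rightarrow> nat \<Rightarrow> 'w \<Rightarrow> real^'n" where
  "pX A B C D w \<Phi> k y v 0 \<omega> = y \<omega>"
| "pX A B C D w \<Phi> k y v (Suc j) \<omega> =
     (let l = k + j; X = pX A B C D w \<Phi> k y v j \<omega> in
      if j = 0 then A k k *v X + B k k *v v \<omega> + w k \<omega> *\<^sub>R (C k k *v X + D k k *v v \<omega>)
      else (A k l + B k l ** \<Phi> l) *v X + w l \<omega> *\<^sub>R ((C k l + D k l ** \<Phi> l) *v X))"

text \<open>Linear feedback equilibrium strategy (only \<Phi>_0..\<Phi>_(N-1) are relevant).\<close>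
definition is_equilibrium :: "'w measure \<Rightarrow> nat \<Rightarrow> (nat \<Rightarrow> nat \<Rightarrow> real^'n^'n) \<Rightarrow> (nat \<Rightarrow> nat \<Rightarrow> real^'m^'n) \<Rightarrow>
    (nat \<Rightarrow> nat \<Rightarrow> real^'n^'n) \<Rightarrow> (nat \<Rightarrow> nat \<Rightarrow> real^'m^'n) \<Rightarrow>
    (nat \<Rightarrow> nat \<Rightarrow> real^'n^'n) \<Rightarrow> (nat \<Rightarrow> nat \<Rightarrow> real^'m^'m) \<Rightarrow> (nat \<Rightarrow> real^'n^'n) \<Rightarrow>
    ('w \<Rightarrow> real^'n) \<Rightarrow> (nat \<Rightarrow> 'w \<Rightarrow> real) \<Rightarrow> (nat \<Rightarrow> real^'n^'m) \<Rightarrow> bool" where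
  "is_equilibrium M N A B C D Q R G x0 w \<Phi> \<longleftrightarrow>
     (\<forall>t<N. \<forall>x. \<forall>k\<in>{t..<N}. \<forall>v::'w \<Rightarrow> real^'m.
        v \<in> borel_measurable (Fpre M x0 w k) \<and> integrable M (\<lambda>\<omega>. (norm (v \<omega>))\<^sup>2) \<longrightarrow>
        (let Y = eqX A B C D w \<Phi> t x (k - t) in
         costJ M N A B C D Q R G w k Y
           (\<lambda>l \<omega>. \<Phi> l *v clX A B C D w \<Phi> k Y (l - k) \<omega>)
         \<le> costJ M N A B C D Q R G w k Y
           (\<lambda>l \<omega>. if l = k then v \<omega> else \<Phi> l *v pX A B C D w \<Phi> k Y v (l - k) \<omega>)))"

end

theory Submission
  imports Defs
begin

text \<open>
  Along the closed loop the expected cost-to-go of system \<open>k\<close> from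
  time \<open>l\<close> is a quadratic form \<open>E[X\<^sup>T P X]\<close> whose weight \<open>P\<close> obeys a backward Lyapunov-type
  recursion: since \<open>w\<^sub>l\<close> has conditional mean 0 and conditional second moment 1 given \<open>\<F>\<^sub>l\<^sub>-\<^sub>1\<close>,
  the expected \<open>P\<close>-norm of \<open>a + w\<^sub>l b\<close> splits into those of \<open>a\<close> and \<open>b\<close>. Hence deviating at time \<open>k\<close>
  alone to \<open>v\<close> costs the expectation of a quadratic function of \<open>v\<close> whose Hessian
  \<open>R + B\<^sup>T P B + D\<^sup>T P D\<close> is positive definite, as \<open>Q, G \<ge> 0\<close> force \<open>P \<ge> 0\<close> and \<open>R > 0\<close>.
  Its unique minimiser is linear in the state, and since \<open>P\<close> only depends on \<open>\<Phi>\<^sub>k\<^sub>+\<^sub>1, \<dots>, \<Phi>\<^sub>N\<^sub>-\<^sub>1\<close>,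
  the equilibrium condition determines \<open>\<Phi>\<^sub>N\<^sub>-\<^sub>1, \<Phi>\<^sub>N\<^sub>-\<^sub>2, \<dots>\<close> one after the other.
\<close>

section \<open>Square-integrable random vectors and quadratic forms\<close>

abbreviation square_integrable :: "'a measure \<Rightarrow> ('a \<Rightarrow> 'b::real_normed_vector) \<Rightarrow> bool" where
  "square_integrable M f \<equiv> integrable M (\<lambda>x. (norm (f x))\<^sup>2)"

lemma borel_measurable_matrix_vector_mult [measurable]:
  fixes S :: "real^'n^'m"
  assumes "f \<in> borel_measurable F"
  shows "(\<lambda>x. S *v f x) \<in> borel_measurable F"
  using measurable_compose[OF assms borel_measurable_continuous_onI[OF linear_continuous_on]]
    matrix_vector_mul_bounded_linear by blast

lemma square_integrable_add:
  fixes f g :: "'a \<Rightarrow> 'b::euclidean_space"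
  assumes [measurable]: "f \<in> borel_measurable M" "g \<in> borel_measurable M"
    and "square_integrable M f" "square_integrable M g"
  shows "square_integrable M (\<lambda>x. f x + g x)"
proof (rule Bochner_Integration.integrable_bound)
  show "integrable M (\<lambda>x. 2 * (norm (f x))\<^sup>2 + 2 * (norm (g x))\<^sup>2)"
    using assms(3,4) by auto
  have "(norm (f x + g x))\<^sup>2 \<le> 2 * (norm (f x))\<^sup>2 + 2 * (norm (g x))\<^sup>2" for x
  proof -
    have "(norm (f x + g x))\<^sup>2 \<le> (norm (f x) + norm (g x))\<^sup>2"
      by (intro power_mono norm_triangle_ineq) simp
    also have "\<dots> \<le> 2 * (norm (f x))\<^sup>2 + 2 * (norm (g x))\<^sup>2"
      using sum_squares_bound[of "norm (f x)" "norm (g x)"] by (simp add: power2_eq_square algebra_simps)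
    finally show ?thesis .
  qed
  then show "AE x in M. norm ((norm (f x + g x))\<^sup>2) \<le> norm (2 * (norm (f x))\<^sup>2 + 2 * (norm (g x))\<^sup>2)"
    by simp
qed measurable

lemma square_integrable_matrix_vector_mult:
  fixes S :: "real^'n^'m"
  assumes [measurable]: "f \<in> borel_measurable M" and "square_integrable M f"
  shows "square_integrable M (\<lambda>x. S *v f x)"
proof -
  obtain K where K: "\<And>x. norm (S *v x) \<le> norm x * K"
    using bounded_linear.bounded[OF matrix_vector_mul_bounded_linear] by blast
  show ?thesis
  proof (rule Bochner_Integration.integrable_bound)
    show "integrable M (\<lambda>x. K\<^sup>2 * (norm (f x))\<^sup>2)" using assms(2) by auto
    have "(norm (S *v f x))\<^sup>2 \<le> K\<^sup>2 * (norm (f x))\<^sup>2" for x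
      using power_mono[OF K[of "f x"]] by (simp add: power_mult_distrib mult.commute)
    then show "AE x in M. norm ((norm (S *v f x))\<^sup>2) \<le> norm (K\<^sup>2 * (norm (f x))\<^sup>2)"
      by simp
  qed measurable
qed

lemma integrable_inner_matrix_vector_mult:
  fixes f :: "'a \<Rightarrow> real^'m" and g :: "'a \<Rightarrow> real^'n" and S :: "real^'n^'m"
  assumes [measurable]: "f \<in> borel_measurable M" "g \<in> borel_measurable M"
    and "square_integrable M f" "square_integrable M g"
  shows "integrable M (\<lambda>x. f x \<bullet> (S *v g x))"
proof (rule Bochner_Integration.integrable_bound)
  show "integrable M (\<lambda>x. (norm (f x))\<^sup>2 + (norm (S *v g x))\<^sup>2)"
    using assms(3) square_integrable_matrix_vector_mult[OF assms(2,4), of S] by auto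
  have "\<bar>f x \<bullet> (S *v g x)\<bar> \<le> (norm (f x))\<^sup>2 + (norm (S *v g x))\<^sup>2" for x
  proof -
    have "\<bar>f x \<bullet> (S *v g x)\<bar> \<le> norm (f x) * norm (S *v g x)"
      by (rule Cauchy_Schwarz_ineq2)
    also have "\<dots> \<le> (norm (f x))\<^sup>2 + (norm (S *v g x))\<^sup>2"
      using sum_squares_bound[of "norm (f x)" "norm (S *v g x)"]
        mult_nonneg_nonneg[OF norm_ge_zero norm_ge_zero, of "f x" "S *v g x"]
      unfolding power2_eq_square by linarith
    finally show ?thesis .
  qed
  then show "AE x in M. norm (f x \<bullet> (S *v g x)) \<le> norm ((norm (f x))\<^sup>2 + (norm (S *v g x))\<^sup>2)"
    by simp
qed measurable

lemma matrix_vector_mult_minus_left: "(- S) *v x = - (S *v x)"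
  for S :: "real^'n^'m"
  by (metis diff_0 matrix_vector_mult_0 matrix_vector_mult_diff_rdistrib)

lemma matrix_vector_mult_minus_right: "S *v (- x) = - (S *v x)"
  for S :: "real^'n^'m"
  by (metis diff_0 matrix_vector_mult_0_right matrix_vector_mult_diff_distrib)

lemma inner_transpose_matrix_vector: "x \<bullet> (transpose K *v z) = (K *v x) \<bullet> (z::real^'m)"
  for K :: "real^'n^'m"
  by (metis dot_lmul_matrix inner_commute transpose_matrix_vector)

lemma inner_congruence_matrix_vector:
  "x \<bullet> ((transpose K ** P ** L) *v z) = (K *v x) \<bullet> (P *v (L *v z))"
  for K :: "real^'n^'m" and P :: "real^'m^'m"
  by (simp only: matrix_vector_mul_assoc[symmetric] inner_transpose_matrix_vector)

lemma inner_symmetric_matrix: "transpose P = P \<Longrightarrow> x \<bullet> (P *v y) = y \<bullet> (P *v x)"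
  for P :: "real^'n^'n"
  by (metis inner_transpose_matrix_vector inner_commute)

lemma transpose_add: "transpose (X + Y) = transpose X + transpose Y"
  for X Y :: "real^'n^'m"
  by (simp add: transpose_def vec_eq_iff)

lemma transpose_congruence: "transpose P = P \<Longrightarrow> transpose (transpose K ** P ** K) = transpose K ** P ** K"
  for K :: "real^'n^'m" and P :: "real^'m^'m"
  by (simp add: matrix_transpose_mul matrix_mul_assoc)

lemma pd_imp_psd_mat: "pd_mat P \<Longrightarrow> psd_mat P"
  unfolding pd_mat_def psd_mat_def by (metis inner_zero_left order.refl less_imp_le)

lemma psd_mat_add: "psd_mat P \<Longrightarrow> psd_mat S \<Longrightarrow> psd_mat (P + S)"
  unfolding psd_mat_def by (simp add: matrix_vector_mult_add_rdistrib inner_add_right)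

lemma pd_psd_mat_add: "pd_mat P \<Longrightarrow> psd_mat S \<Longrightarrow> pd_mat (P + S)"
  unfolding pd_mat_def psd_mat_def
  by (simp add: matrix_vector_mult_add_rdistrib inner_add_right add_pos_nonneg)

lemma psd_mat_congruence: "psd_mat P \<Longrightarrow> psd_mat (transpose K ** P ** K)"
  for K :: "real^'n^'m" and P :: "real^'m^'m"
  unfolding psd_mat_def by (simp add: inner_congruence_matrix_vector)

lemma pd_mat_invertible: "pd_mat P \<Longrightarrow> invertible P"
  unfolding pd_mat_def invertible_left_inverse matrix_left_invertible_ker
  by (metis inner_zero_right less_irrefl)

lemma invertible_matrix_inv_right: "invertible A \<Longrightarrow> A ** matrix_inv A = mat 1"
  for A :: "real^'n^'n"
  unfolding invertible_def matrix_inv_def by (rule someI2_ex) auto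

lemma backward_fixpoint_exists:
  fixes F :: "(nat \<Rightarrow> 'a) \<Rightarrow> nat \<Rightarrow> 'a"
  assumes F_later: "\<And>\<Phi> \<Psi> k. k < N \<Longrightarrow> (\<And>l. k < l \<Longrightarrow> l < N \<Longrightarrow> \<Phi> l = \<Psi> l) \<Longrightarrow> F \<Phi> k = F \<Psi> k"
  shows "\<exists>\<Phi>. \<forall>k<N. \<Phi> k = F \<Phi> k"
proof -
  have "\<exists>\<Phi>. \<forall>k. N - i \<le> k \<longrightarrow> k < N \<longrightarrow> \<Phi> k = F \<Phi> k" for i
  proof (induction i)
    case (Suc i)
    then obtain \<Phi> where \<Phi>: "\<forall>k. N - i \<le> k \<longrightarrow> k < N \<longrightarrow> \<Phi> k = F \<Phi> k" by blast
    define k0 where "k0 = N - Suc i"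
    define \<Psi> where "\<Psi> = \<Phi>(k0 := F \<Phi> k0)"
    have "\<Psi> k = F \<Psi> k" if "N - Suc i \<le> k" "k < N" for k
    proof -
      have "F \<Psi> k = F \<Phi> k"
        by (rule F_later) (use that in \<open>auto simp: \<Psi>_def k0_def\<close>)
      then show ?thesis using \<Phi> that by (auto simp: \<Psi>_def k0_def)
    qed
    then show ?case by blast
  qed simp
  from this[of N] show ?thesis by auto
qed

section \<open>The noise filtration\<close>

locale noise_filtration = prob_space M for M :: "'w measure" +
  fixes x0 :: "'w \<Rightarrow> 'a::topological_space" and w :: "nat \<Rightarrow> 'w \<Rightarrow> real"
  assumes x0_measurable: "x0 \<in> borel_measurable M"
    and w_measurable [measurable]: "\<And>k. w k \<in> borel_measurable M"
    and w_square_integrable: "\<And>k. integrable M (\<lambda>\<omega>. (w k \<omega>)\<^sup>2)"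
    and w_cond_mean: "\<And>k. AE \<omega> in M. real_cond_exp M (Fpre M x0 w k) (w k) \<omega> = 0"
    and w_cond_square: "\<And>k. AE \<omega> in M. real_cond_exp M (Fpre M x0 w k) (\<lambda>\<omega>. (w k \<omega>)\<^sup>2) \<omega> = 1"
begin

definition generators :: "nat \<Rightarrow> 'w set set" where
  "generators k = {x0 -` S \<inter> space M | S. S \<in> sets borel} \<union>
      (\<Union>l\<in>{..k}. {w l -` S \<inter> space M | S. S \<in> sets borel})"

lemma generators_subset: "generators k \<subseteq> sets M"
  unfolding generators_def using x0_measurable by (auto simp: measurable_sets)

lemma generators_Pow: "generators k \<subseteq> Pow (space M)"
  unfolding generators_def by auto

lemma generators_mono: "k \<le> j \<Longrightarrow> generators k \<subseteq> generators j"
  unfolding generators_def by (intro Un_mono subset_refl UN_mono) auto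

lemma Fpre_eq: "Fpre M x0 w k = sigma (space M) (if k = 0 then {} else generators (k - 1))"
  unfolding Fpre_def Ffilt_def generators_def by simp

lemma space_Fpre [simp]: "space (Fpre M x0 w k) = space M"
  unfolding Fpre_eq using generators_Pow by auto

lemma sets_Fpre:
  "sets (Fpre M x0 w k) = sigma_sets (space M) (if k = 0 then {} else generators (k - 1))"
  unfolding Fpre_eq using generators_Pow by auto

lemma subalgebra_Fpre_mono: "k \<le> j \<Longrightarrow> subalgebra (Fpre M x0 w j) (Fpre M x0 w k)"
  unfolding subalgebra_def sets_Fpre
  using generators_mono[OF diff_le_mono, of k j 1] by (auto intro!: sigma_sets_mono')

lemma subalgebra_Fpre: "subalgebra M (Fpre M x0 w k)"
  unfolding subalgebra_def sets_Fpre using generators_subset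
  by (auto intro!: sets.sigma_sets_subset)

lemma measurable_Fpre_mono: "f \<in> measurable (Fpre M x0 w k) X \<Longrightarrow> k \<le> j \<Longrightarrow> f \<in> measurable (Fpre M x0 w j) X"
  using measurable_from_subalg subalgebra_Fpre_mono by blast

lemma measurable_Fpre_imp_measurable: "f \<in> measurable (Fpre M x0 w k) X \<Longrightarrow> f \<in> measurable M X"
  using measurable_from_subalg subalgebra_Fpre by blast

lemma w_measurable_Fpre_Suc: "w k \<in> borel_measurable (Fpre M x0 w (Suc k))"
proof (rule measurableI)
  fix S :: "real set" assume "S \<in> sets borel"
  then have "w k -` S \<inter> space M \<in> generators k" unfolding generators_def by blast
  then show "w k -` S \<inter> space (Fpre M x0 w (Suc k)) \<in> sets (Fpre M x0 w (Suc k))"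
    unfolding sets_Fpre by auto
qed simp

lemma sigma_finite_subalgebra_Fpre: "sigma_finite_subalgebra M (Fpre M x0 w k)"
proof -
  have "finite_measure_subalgebra M (Fpre M x0 w k)"
    by unfold_locales (rule subalgebra_Fpre)
  then show ?thesis by (rule finite_measure_subalgebra_is_sigma_finite)
qed

text \<open>The real conditional expectation yields \<open>E[h w\<^sub>k\<^sup>2] = E[h]\<close> only once \<open>h w\<^sub>k\<^sup>2\<close> is known to
  be integrable; that integrability comes from the nonnegative conditional expectation.\<close>

lemma nn_cond_exp_w_square: "AE x in M. nn_cond_exp M (Fpre M x0 w k) (\<lambda>x. ennreal ((w k x)\<^sup>2)) x = 1"
proof -
  interpret sigma_finite_subalgebra M "Fpre M x0 w k" by (rule sigma_finite_subalgebra_Fpre)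
  let ?g = "\<lambda>x. ennreal ((w k x)\<^sup>2)"
  have "(\<integral>\<^sup>+x. nn_cond_exp M (Fpre M x0 w k) ?g x \<partial>M) = (\<integral>\<^sup>+x. ?g x \<partial>M)"
    using nn_cond_exp_intg[of "\<lambda>_. 1" ?g] by simp
  also have "\<dots> < \<infinity>"
    using w_square_integrable[of k] by (simp add: integrable_iff_bounded)
  finally have finite: "AE x in M. nn_cond_exp M (Fpre M x0 w k) ?g x \<noteq> \<infinity>"
    by (intro nn_integral_PInf_AE borel_measurable_nn_cond_exp2) simp
  have "AE x in M. nn_cond_exp M (Fpre M x0 w k) (\<lambda>x. ennreal (- (w k x)\<^sup>2)) x = 0"
    using nn_cond_exp_F_meas[of "\<lambda>_. 0"] by (simp add: ennreal_neg)
  then show ?thesis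
    using finite w_cond_square[of k]
  proof eventually_elim
    case (elim x)
    let ?c = "nn_cond_exp M (Fpre M x0 w k) ?g x"
    have "enn2real ?c = 1" using elim unfolding real_cond_exp_def by simp
    moreover have "?c = ennreal (enn2real ?c)" using elim(2) by (simp add: less_top)
    ultimately show ?case by simp
  qed
qed

lemma nn_integral_mult_w_square:
  assumes "h \<in> borel_measurable (Fpre M x0 w k)"
  shows "(\<integral>\<^sup>+x. ennreal (h x) * ennreal ((w k x)\<^sup>2) \<partial>M) = (\<integral>\<^sup>+x. ennreal (h x) \<partial>M)"
proof -
  interpret sigma_finite_subalgebra M "Fpre M x0 w k" by (rule sigma_finite_subalgebra_Fpre)
  have "(\<integral>\<^sup>+x. ennreal (h x) * ennreal ((w k x)\<^sup>2) \<partial>M)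
      = (\<integral>\<^sup>+x. ennreal (h x) * nn_cond_exp M (Fpre M x0 w k) (\<lambda>x. ennreal ((w k x)\<^sup>2)) x \<partial>M)"
    using assms by (intro nn_cond_exp_intg[symmetric]) auto
  also have "\<dots> = (\<integral>\<^sup>+x. ennreal (h x) \<partial>M)"
    using nn_cond_exp_w_square[of k] by (intro nn_integral_cong_AE) auto
  finally show ?thesis .
qed

lemma integrable_mult_w_square:
  assumes "h \<in> borel_measurable (Fpre M x0 w k)" and "integrable M h"
  shows "integrable M (\<lambda>x. h x * (w k x)\<^sup>2)"
proof -
  have [measurable]: "h \<in> borel_measurable M"
    using assms(1) by (rule measurable_Fpre_imp_measurable)
  have "(\<integral>\<^sup>+x. ennreal (norm (h x * (w k x)\<^sup>2)) \<partial>M) = (\<integral>\<^sup>+x. ennreal \<bar>h x\<bar> * ennreal ((w k x)\<^sup>2) \<partial>M)"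
    by (simp add: abs_mult ennreal_mult)
  also have "\<dots> = (\<integral>\<^sup>+x. ennreal (norm (h x)) \<partial>M)"
    using assms(1) by (simp add: nn_integral_mult_w_square)
  also have "\<dots> < \<infinity>"
    using assms(2) by (simp add: integrable_iff_bounded)
  finally show ?thesis by (intro integrableI_bounded) auto
qed

lemma integral_mult_w_square:
  assumes "h \<in> borel_measurable (Fpre M x0 w k)" and "integrable M h"
  shows "(\<integral>x. h x * (w k x)\<^sup>2 \<partial>M) = (\<integral>x. h x \<partial>M)"
proof -
  interpret sigma_finite_subalgebra M "Fpre M x0 w k" by (rule sigma_finite_subalgebra_Fpre)
  have "(\<integral>x. h x * (w k x)\<^sup>2 \<partial>M) = (\<integral>x. h x * real_cond_exp M (Fpre M x0 w k) (\<lambda>x. (w k x)\<^sup>2) x \<partial>M)"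
    using assms integrable_mult_w_square[OF assms] by (intro real_cond_exp_intg(2)[symmetric]) auto
  also have "\<dots> = (\<integral>x. h x \<partial>M)"
    using w_cond_square[of k] measurable_Fpre_imp_measurable[OF assms(1)] by (intro integral_cong_AE) auto
  finally show ?thesis .
qed

lemma integrable_mult_w:
  assumes "h \<in> borel_measurable (Fpre M x0 w k)" and "integrable M h"
  shows "integrable M (\<lambda>x. h x * w k x)"
proof (rule Bochner_Integration.integrable_bound)
  show "integrable M (\<lambda>x. \<bar>h x\<bar> + \<bar>h x\<bar> * (w k x)\<^sup>2)"
    using assms by (intro Bochner_Integration.integrable_add integrable_abs integrable_mult_w_square) auto
  have "\<bar>w k x\<bar> \<le> 1 + (w k x)\<^sup>2" for x
    using sum_squares_bound[of 1 "\<bar>w k x\<bar>"] by (simp add: power2_eq_square)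
  then have "\<bar>h x * w k x\<bar> \<le> \<bar>h x\<bar> + \<bar>h x\<bar> * (w k x)\<^sup>2" for x
    using mult_left_mono[of "\<bar>w k x\<bar>" "1 + (w k x)\<^sup>2" "\<bar>h x\<bar>"] by (simp add: abs_mult algebra_simps)
  then show "AE x in M. norm (h x * w k x) \<le> norm (\<bar>h x\<bar> + \<bar>h x\<bar> * (w k x)\<^sup>2)"
    by simp
qed (use measurable_Fpre_imp_measurable[OF assms(1)] in measurable)

lemma integral_mult_w:
  assumes "h \<in> borel_measurable (Fpre M x0 w k)" and "integrable M h"
  shows "(\<integral>x. h x * w k x \<partial>M) = 0"
proof -
  interpret sigma_finite_subalgebra M "Fpre M x0 w k" by (rule sigma_finite_subalgebra_Fpre)
  have "(\<integral>x. h x * w k x \<partial>M) = (\<integral>x. h x * real_cond_exp M (Fpre M x0 w k) (w k) x \<partial>M)"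
    using assms integrable_mult_w[OF assms] by (intro real_cond_exp_intg(2)[symmetric]) auto
  also have "\<dots> = 0"
    using w_cond_mean[of k] measurable_Fpre_imp_measurable[OF assms(1)]
    by (subst integral_cong_AE[where g="\<lambda>x. 0"]) auto
  finally show ?thesis .
qed

text \<open>\<open>L2F k X\<close> is the paper's \<open>X \<in> L\<^sup>2\<^sub>\<F>(k; \<real>\<^sup>n)\<close>; note that \<open>Fpre M x0 w k\<close> is
  \<open>\<F>\<^sub>k\<^sub>-\<^sub>1\<close>.\<close>

definition L2F :: "nat \<Rightarrow> ('w \<Rightarrow> 'b::real_normed_vector) \<Rightarrow> bool" where
  "L2F k X \<longleftrightarrow> X \<in> borel_measurable (Fpre M x0 w k) \<and> square_integrable M X"

lemma L2F_borel_measurable: "L2F k X \<Longrightarrow> X \<in> borel_measurable M"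
  unfolding L2F_def using measurable_Fpre_imp_measurable by blast

lemma L2F_const: "L2F k (\<lambda>_. c)"
  unfolding L2F_def by simp

lemma L2F_mono: "L2F k X \<Longrightarrow> k \<le> j \<Longrightarrow> L2F j X"
  unfolding L2F_def using measurable_Fpre_mono by blast

lemma L2F_add: "L2F k X \<Longrightarrow> L2F k Y \<Longrightarrow> L2F k (\<lambda>\<omega>. X \<omega> + Y \<omega>)"
  for X Y :: "'w \<Rightarrow> 'b::euclidean_space"
  using square_integrable_add[OF L2F_borel_measurable L2F_borel_measurable, of k X k Y]
  unfolding L2F_def by auto

lemma L2F_matrix_vector_mult: "L2F k X \<Longrightarrow> L2F k (\<lambda>\<omega>. S *v X \<omega>)"
  for S :: "real^'n^'m"
  using square_integrable_matrix_vector_mult[OF L2F_borel_measurable[of k X], where S=S]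
  unfolding L2F_def by auto

lemma integrable_inner_L2F:
  fixes S :: "real^'n^'m"
  shows "L2F k X \<Longrightarrow> L2F j Y \<Longrightarrow> integrable M (\<lambda>\<omega>. X \<omega> \<bullet> (S *v Y \<omega>))"
  using integrable_inner_matrix_vector_mult[OF L2F_borel_measurable[of k X] L2F_borel_measurable[of j Y], where S=S]
  unfolding L2F_def by auto

lemma L2F_noise_step:
  fixes a b :: "'w \<Rightarrow> real^'n"
  assumes "L2F l a" "L2F l b"
  shows "L2F (Suc l) (\<lambda>\<omega>. a \<omega> + w l \<omega> *\<^sub>R b \<omega>)"
proof -
  have [measurable]: "a \<in> borel_measurable (Fpre M x0 w (Suc l))" "b \<in> borel_measurable (Fpre M x0 w (Suc l))"
    using assms measurable_Fpre_mono[of _ l _ "Suc l"] unfolding L2F_def by auto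
  note [measurable] = w_measurable_Fpre_Suc
  have "integrable M (\<lambda>\<omega>. (norm (b \<omega>))\<^sup>2 * (w l \<omega>)\<^sup>2)"
    using assms(2) unfolding L2F_def by (intro integrable_mult_w_square) auto
  then have "L2F (Suc l) (\<lambda>\<omega>. w l \<omega> *\<^sub>R b \<omega>)"
    unfolding L2F_def by (simp add: power_mult_distrib mult.commute)
  then show ?thesis
    using L2F_mono[OF assms(1)] by (intro L2F_add) auto
qed

lemma integral_quadratic_noise_step:
  fixes a b :: "'w \<Rightarrow> real^'n" and S :: "real^'n^'n"
  assumes "L2F l a" "L2F l b"
  shows "(\<integral>\<omega>. (a \<omega> + w l \<omega> *\<^sub>R b \<omega>) \<bullet> (S *v (a \<omega> + w l \<omega> *\<^sub>R b \<omega>)) \<partial>M)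
       = (\<integral>\<omega>. a \<omega> \<bullet> (S *v a \<omega>) \<partial>M) + (\<integral>\<omega>. b \<omega> \<bullet> (S *v b \<omega>) \<partial>M)"
proof -
  define g where "g \<omega> = a \<omega> \<bullet> (S *v b \<omega>) + b \<omega> \<bullet> (S *v a \<omega>)" for \<omega>
  define h where "h \<omega> = b \<omega> \<bullet> (S *v b \<omega>)" for \<omega>
  have [measurable]: "a \<in> borel_measurable (Fpre M x0 w l)" "b \<in> borel_measurable (Fpre M x0 w l)"
    using assms unfolding L2F_def by auto
  have g: "g \<in> borel_measurable (Fpre M x0 w l)" "integrable M g"
    unfolding g_def using assms by (auto intro: integrable_inner_L2F)
  have h: "h \<in> borel_measurable (Fpre M x0 w l)" "integrable M h"
    unfolding h_def using assms by (auto intro: integrable_inner_L2F)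
  have "(a \<omega> + w l \<omega> *\<^sub>R b \<omega>) \<bullet> (S *v (a \<omega> + w l \<omega> *\<^sub>R b \<omega>))
       = a \<omega> \<bullet> (S *v a \<omega>) + g \<omega> * w l \<omega> + h \<omega> * (w l \<omega>)\<^sup>2" for \<omega>
    unfolding g_def h_def
    by (simp add: algebra_simps power2_eq_square)
  then have "(\<integral>\<omega>. (a \<omega> + w l \<omega> *\<^sub>R b \<omega>) \<bullet> (S *v (a \<omega> + w l \<omega> *\<^sub>R b \<omega>)) \<partial>M)
      = (\<integral>\<omega>. a \<omega> \<bullet> (S *v a \<omega>) \<partial>M) + (\<integral>\<omega>. g \<omega> * w l \<omega> \<partial>M) + (\<integral>\<omega>. h \<omega> * (w l \<omega>)\<^sup>2 \<partial>M)"
    using integrable_inner_L2F[OF assms(1,1), of S] integrable_mult_w[OF g] integrable_mult_w_square[OF h]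
    by simp
  also have "\<dots> = (\<integral>\<omega>. a \<omega> \<bullet> (S *v a \<omega>) \<partial>M) + (\<integral>\<omega>. b \<omega> \<bullet> (S *v b \<omega>) \<partial>M)"
    using integral_mult_w[OF g] integral_mult_w_square[OF h] by (simp add: h_def)
  finally show ?thesis .
qed

end

section \<open>Cost-to-go matrices of a feedback strategy\<close>

locale lq_problem = noise_filtration M x0 w
  for M :: "'w measure" and x0 :: "'w \<Rightarrow> real^'n" and w +
  fixes N :: nat and A C :: "nat \<Rightarrow> nat \<Rightarrow> real^'n^'n" and B D :: "nat \<Rightarrow> nat \<Rightarrow> real^'m^'n"
    and Q :: "nat \<Rightarrow> nat \<Rightarrow> real^'n^'n" and R :: "nat \<Rightarrow> nat \<Rightarrow> real^'m^'m" and G :: "nat \<Rightarrow> real^'n^'n"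
  assumes Q_R_weights: "\<And>t k. t \<le> k \<Longrightarrow> k < N \<Longrightarrow>
      transpose (Q t k) = Q t k \<and> transpose (R t k) = R t k \<and> psd_mat (Q t k) \<and> pd_mat (R t k)"
    and G_weight: "\<And>t. t < N \<Longrightarrow> transpose (G t) = G t \<and> psd_mat (G t)"
begin

text \<open>\<open>cost_matrix \<Phi> k l\<close> is the weight of the expected cost-to-go of system \<open>k\<close> from time \<open>l\<close>
  when \<open>\<Phi>\<close> is applied from \<open>l\<close> on.\<close>

function cost_matrix :: "(nat \<Rightarrow> real^'n^'m) \<Rightarrow> nat \<Rightarrow> nat \<Rightarrow> real^'n^'n" where
  "cost_matrix \<Phi> k l =
    (if N \<le> l then G k
     else Q k l + transpose (\<Phi> l) ** R k l ** \<Phi> l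
       + transpose (A k l + B k l ** \<Phi> l) ** cost_matrix \<Phi> k (Suc l) ** (A k l + B k l ** \<Phi> l)
       + transpose (C k l + D k l ** \<Phi> l) ** cost_matrix \<Phi> k (Suc l) ** (C k l + D k l ** \<Phi> l))"
  by auto
termination by (relation "Wellfounded.measure (\<lambda>(\<Phi>, k, l). N - l)") auto

declare cost_matrix.simps [simp del]

lemma cost_matrix_terminal: "N \<le> l \<Longrightarrow> cost_matrix \<Phi> k l = G k"
  by (simp add: cost_matrix.simps)

lemma cost_matrix_step: "l < N \<Longrightarrow> cost_matrix \<Phi> k l =
    Q k l + transpose (\<Phi> l) ** R k l ** \<Phi> l
    + transpose (A k l + B k l ** \<Phi> l) ** cost_matrix \<Phi> k (Suc l) ** (A k l + B k l ** \<Phi> l)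
    + transpose (C k l + D k l ** \<Phi> l) ** cost_matrix \<Phi> k (Suc l) ** (C k l + D k l ** \<Phi> l)"
  by (subst cost_matrix.simps) simp

lemma cost_matrix_cong:
  "(\<And>j. l \<le> j \<Longrightarrow> j < N \<Longrightarrow> \<Phi> j = \<Psi> j) \<Longrightarrow> cost_matrix \<Phi> k l = cost_matrix \<Psi> k l"
proof (induction \<Phi> k l rule: cost_matrix.induct)
  case (1 \<Phi> k l)
  then show ?case
    by (cases "N \<le> l") (simp_all add: cost_matrix_terminal cost_matrix_step)
qed

lemma cost_matrix_symmetric_psd:
  "k < N \<Longrightarrow> k \<le> l \<Longrightarrow> transpose (cost_matrix \<Phi> k l) = cost_matrix \<Phi> k l \<and> psd_mat (cost_matrix \<Phi> k l)"
proof (induction \<Phi> k l rule: cost_matrix.induct)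
  case (1 \<Phi> k l)
  show ?case
  proof (cases "N \<le> l")
    case True
    then show ?thesis using G_weight[OF "1.prems"(1)] by (simp add: cost_matrix_terminal)
  next
    case False
    define P where "P = cost_matrix \<Phi> k (Suc l)"
    define K where "K = A k l + B k l ** \<Phi> l"
    define L where "L = C k l + D k l ** \<Phi> l"
    have P: "transpose P = P" "psd_mat P"
      using "1" False unfolding P_def by auto
    have QR: "transpose (Q k l) = Q k l" "transpose (R k l) = R k l" "psd_mat (Q k l)" "pd_mat (R k l)"
      using Q_R_weights[of k l] "1.prems" False by auto
    have "cost_matrix \<Phi> k l = Q k l + transpose (\<Phi> l) ** R k l ** \<Phi> l + transpose K ** P ** K
        + transpose L ** P ** L"
      using False unfolding P_def K_def L_def by (simp add: cost_matrix_step)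
    then show ?thesis
      using P QR
      by (simp add: transpose_add transpose_congruence psd_mat_add psd_mat_congruence pd_imp_psd_mat)
  qed
qed

lemma quadratic_cost_matrix_step:
  "l < N \<Longrightarrow> x \<bullet> (cost_matrix \<Phi> k l *v x) =
     x \<bullet> (Q k l *v x) + (\<Phi> l *v x) \<bullet> (R k l *v (\<Phi> l *v x))
     + ((A k l + B k l ** \<Phi> l) *v x) \<bullet> (cost_matrix \<Phi> k (Suc l) *v ((A k l + B k l ** \<Phi> l) *v x))
     + ((C k l + D k l ** \<Phi> l) *v x) \<bullet> (cost_matrix \<Phi> k (Suc l) *v ((C k l + D k l ** \<Phi> l) *v x))"
  by (simp add: cost_matrix_step matrix_vector_mult_add_rdistrib inner_add_right inner_congruence_matrix_vector)

text \<open>\<open>stage_cost P k y v\<close>: cost of system \<open>k\<close> from state \<open>y\<close> when \<open>v\<close> is played at time \<open>k\<close>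
  and the cost-to-go from time \<open>k + 1\<close> has weight \<open>P\<close>.\<close>

definition stage_cost :: "real^'n^'n \<Rightarrow> nat \<Rightarrow> real^'n \<Rightarrow> real^'m \<Rightarrow> real" where
  "stage_cost P k y v = y \<bullet> (Q k k *v y) + v \<bullet> (R k k *v v)
     + (A k k *v y + B k k *v v) \<bullet> (P *v (A k k *v y + B k k *v v))
     + (C k k *v y + D k k *v v) \<bullet> (P *v (C k k *v y + D k k *v v))"

definition stage_hessian :: "real^'n^'n \<Rightarrow> nat \<Rightarrow> real^'m^'m" where
  "stage_hessian P k = R k k + transpose (B k k) ** P ** B k k + transpose (D k k) ** P ** D k k"

definition stage_coupling :: "real^'n^'n \<Rightarrow> nat \<Rightarrow> real^'n^'m" where
  "stage_coupling P k = transpose (B k k) ** P ** A k k + transpose (D k k) ** P ** C k k"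

definition equilibrium_gain :: "(nat \<Rightarrow> real^'n^'m) \<Rightarrow> nat \<Rightarrow> real^'n^'m" where
  "equilibrium_gain \<Phi> k = (let P = cost_matrix \<Phi> k (Suc k) in
     - (matrix_inv (stage_hessian P k) ** stage_coupling P k))"

lemma stage_cost_completion_of_squares:
  assumes P: "transpose P = P" and R: "transpose (R k k) = R k k"
    and first_order: "stage_hessian P k *v f = - (stage_coupling P k *v y)"
  shows "stage_cost P k y v - stage_cost P k y f = (v - f) \<bullet> (stage_hessian P k *v (v - f))"
proof -
  define u where "u = v - f"
  have "u \<bullet> (stage_hessian P k *v f) + u \<bullet> (stage_coupling P k *v y) = 0"
    using first_order by simp
  then have "u \<bullet> (R k k *v f) + (B k k *v u) \<bullet> (P *v (B k k *v f)) + (D k k *v u) \<bullet> (P *v (D k k *v f))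
      + (B k k *v u) \<bullet> (P *v (A k k *v y)) + (D k k *v u) \<bullet> (P *v (C k k *v y)) = 0"
    by (simp add: stage_hessian_def stage_coupling_def matrix_vector_mult_add_rdistrib inner_add_right
        inner_congruence_matrix_vector)
  moreover have "v = f + u" unfolding u_def by simp
  ultimately show ?thesis
    unfolding u_def[symmetric] stage_cost_def stage_hessian_def
    by (simp add: inner_congruence_matrix_vector inner_symmetric_matrix[OF P]
        inner_symmetric_matrix[OF R] algebra_simps)
qed

lemma stage_hessian_pd: "k < N \<Longrightarrow> psd_mat P \<Longrightarrow> pd_mat (stage_hessian P k)"
  using Q_R_weights[of k k]
  unfolding stage_hessian_def by (simp add: pd_psd_mat_add psd_mat_add psd_mat_congruence add.assoc)

lemma equilibrium_gain_first_order:
  assumes "k < N" and "\<Phi> k = equilibrium_gain \<Phi> k"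
  shows "stage_hessian (cost_matrix \<Phi> k (Suc k)) k *v (\<Phi> k *v y)
       = - (stage_coupling (cost_matrix \<Phi> k (Suc k)) k *v y)"
proof -
  let ?H = "stage_hessian (cost_matrix \<Phi> k (Suc k)) k"
  have "invertible ?H"
    using assms(1) cost_matrix_symmetric_psd[of k "Suc k" \<Phi>]
    by (intro pd_mat_invertible stage_hessian_pd) auto
  then show ?thesis
    using assms(2) unfolding equilibrium_gain_def Let_def
    by (simp add: matrix_vector_mult_minus_left matrix_vector_mult_minus_right matrix_vector_mul_assoc
        matrix_mul_assoc invertible_matrix_inv_right)
qed

definition feedback_step :: "(nat \<Rightarrow> real^'n^'m) \<Rightarrow> nat \<Rightarrow> nat \<Rightarrow> ('w \<Rightarrow> real^'n) \<Rightarrow> 'w \<Rightarrow> real^'n" where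
  "feedback_step \<Phi> s l X = (\<lambda>\<omega>. (A s l + B s l ** \<Phi> l) *v X \<omega> + w l \<omega> *\<^sub>R ((C s l + D s l ** \<Phi> l) *v X \<omega>))"

lemma L2F_feedback_step: "L2F l X \<Longrightarrow> L2F (Suc l) (feedback_step \<Phi> s l X)"
  unfolding feedback_step_def by (intro L2F_noise_step L2F_matrix_vector_mult)

lemma eqX_0: "eqX A B C D w \<Phi> t x 0 = (\<lambda>_. x)"
  by (simp add: fun_eq_iff)

lemma eqX_Suc: "eqX A B C D w \<Phi> t x (Suc j) = feedback_step \<Phi> (t + j) (t + j) (eqX A B C D w \<Phi> t x j)"
  by (simp add: fun_eq_iff feedback_step_def Let_def)

lemma pX_Suc: "0 < j \<Longrightarrow> pX A B C D w \<Phi> k Y v (Suc j) = feedback_step \<Phi> k (k + j) (pX A B C D w \<Phi> k Y v j)"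
  by (simp add: fun_eq_iff feedback_step_def Let_def)

lemma pX_one: "pX A B C D w \<Phi> k Y v 1 =
    (\<lambda>\<omega>. A k k *v Y \<omega> + B k k *v v \<omega> + w k \<omega> *\<^sub>R (C k k *v Y \<omega> + D k k *v v \<omega>))"
  by (simp add: fun_eq_iff Let_def)

lemma clX_eq_pX: "clX A B C D w \<Phi> k Y j = pX A B C D w \<Phi> k Y (\<lambda>\<omega>. \<Phi> k *v Y \<omega>) j"
  by (induction j) (simp_all add: fun_eq_iff Let_def matrix_vector_mult_add_rdistrib matrix_vector_mul_assoc)

lemma stateX_pX:
  "stateX A B C D w k Y (\<lambda>l \<omega>. if l = k then v \<omega> else \<Phi> l *v pX A B C D w \<Phi> k Y v (l - k) \<omega>) j
   = pX A B C D w \<Phi> k Y v j"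
  by (induction j) (simp_all add: fun_eq_iff Let_def matrix_vector_mult_add_rdistrib matrix_vector_mul_assoc)

lemma L2F_eqX: "L2F (t + j) (eqX A B C D w \<Phi> t x j)"
proof (induction j)
  case 0
  show ?case by (simp add: eqX_0 L2F_const)
next
  case (Suc j)
  then show ?case unfolding eqX_Suc by (simp add: L2F_feedback_step)
qed

lemma L2F_closed_loop:
  assumes X_Suc: "\<And>j. j0 \<le> j \<Longrightarrow> X (Suc j) = feedback_step \<Phi> k (k + j) (X j)"
    and X_start: "L2F (k + j0) (X j0)" and "j0 \<le> j"
  shows "L2F (k + j) (X j)"
  using \<open>j0 \<le> j\<close>
proof (induction rule: dec_induct)
  case (step j)
  then show ?case by (simp add: X_Suc L2F_feedback_step)
qed (rule X_start)

lemma integral_cost_matrix_step: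
  assumes "L2F l X" and "l < N"
  shows "(\<integral>\<omega>. X \<omega> \<bullet> (cost_matrix \<Phi> k l *v X \<omega>) \<partial>M)
    = (\<integral>\<omega>. X \<omega> \<bullet> (Q k l *v X \<omega>) + (\<Phi> l *v X \<omega>) \<bullet> (R k l *v (\<Phi> l *v X \<omega>)) \<partial>M)
      + (\<integral>\<omega>. feedback_step \<Phi> k l X \<omega> \<bullet> (cost_matrix \<Phi> k (Suc l) *v feedback_step \<Phi> k l X \<omega>) \<partial>M)"
proof -
  let ?P = "cost_matrix \<Phi> k (Suc l)"
  define K where "K = A k l + B k l ** \<Phi> l"
  define L where "L = C k l + D k l ** \<Phi> l"
  have LX: "L2F l (\<lambda>\<omega>. K *v X \<omega>)" "L2F l (\<lambda>\<omega>. L *v X \<omega>)" "L2F l (\<lambda>\<omega>. \<Phi> l *v X \<omega>)"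
    using assms(1) by (auto intro: L2F_matrix_vector_mult)
  have "(\<integral>\<omega>. feedback_step \<Phi> k l X \<omega> \<bullet> (?P *v feedback_step \<Phi> k l X \<omega>) \<partial>M)
      = (\<integral>\<omega>. (K *v X \<omega>) \<bullet> (?P *v (K *v X \<omega>)) \<partial>M) + (\<integral>\<omega>. (L *v X \<omega>) \<bullet> (?P *v (L *v X \<omega>)) \<partial>M)"
    unfolding feedback_step_def K_def[symmetric] L_def[symmetric]
    by (rule integral_quadratic_noise_step[OF LX(1,2)])
  moreover have "(\<integral>\<omega>. X \<omega> \<bullet> (cost_matrix \<Phi> k l *v X \<omega>) \<partial>M)
      = (\<integral>\<omega>. X \<omega> \<bullet> (Q k l *v X \<omega>) + (\<Phi> l *v X \<omega>) \<bullet> (R k l *v (\<Phi> l *v X \<omega>)) \<partial>M)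
        + (\<integral>\<omega>. (K *v X \<omega>) \<bullet> (?P *v (K *v X \<omega>)) \<partial>M) + (\<integral>\<omega>. (L *v X \<omega>) \<bullet> (?P *v (L *v X \<omega>)) \<partial>M)"
    using assms(2) integrable_inner_L2F[OF assms(1) assms(1)] integrable_inner_L2F[OF LX(3) LX(3)]
      integrable_inner_L2F[OF LX(1) LX(1)] integrable_inner_L2F[OF LX(2) LX(2)]
    unfolding quadratic_cost_matrix_step[OF assms(2)] K_def[symmetric] L_def[symmetric]
    by simp
  ultimately show ?thesis by simp
qed

lemma closed_loop_cost_to_go:
  assumes X_Suc: "\<And>j. j0 \<le> j \<Longrightarrow> X (Suc j) = feedback_step \<Phi> k (k + j) (X j)"
    and X_start: "L2F (k + j0) (X j0)" and "j0 \<le> j" and "k + j \<le> N"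
  shows "(\<Sum>l\<in>{k+j..<N}. \<integral>\<omega>. X (l-k) \<omega> \<bullet> (Q k l *v X (l-k) \<omega>)
            + (\<Phi> l *v X (l-k) \<omega>) \<bullet> (R k l *v (\<Phi> l *v X (l-k) \<omega>)) \<partial>M)
         + (\<integral>\<omega>. X (N-k) \<omega> \<bullet> (G k *v X (N-k) \<omega>) \<partial>M)
       = (\<integral>\<omega>. X j \<omega> \<bullet> (cost_matrix \<Phi> k (k + j) *v X j \<omega>) \<partial>M)"
proof -
  have "j \<le> N - k" using assms(4) by simp
  then show ?thesis
  proof (induction rule: inc_induct)
    case base
    then show ?case using assms(4) by (simp add: cost_matrix_terminal)
  next
    case (step n)
    have "L2F (k + n) (X n)"
      using L2F_closed_loop[OF X_Suc X_start] \<open>j0 \<le> j\<close> step.hyps(1) by simp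
    from integral_cost_matrix_step[OF this, of \<Phi> k] step.hyps(2) step.IH \<open>j0 \<le> j\<close> step.hyps(1)
    show ?case by (simp add: sum.atLeast_Suc_lessThan X_Suc)
  qed
qed

lemma integrable_stage_cost:
  assumes "L2F k Y" "L2F k V"
  shows "integrable M (\<lambda>\<omega>. stage_cost P s (Y \<omega>) (V \<omega>))"
proof -
  have "L2F k (\<lambda>\<omega>. A s s *v Y \<omega> + B s s *v V \<omega>)" "L2F k (\<lambda>\<omega>. C s s *v Y \<omega> + D s s *v V \<omega>)"
    using assms by (auto intro: L2F_add L2F_matrix_vector_mult)
  then show ?thesis
    unfolding stage_cost_def using assms
    by (intro Bochner_Integration.integrable_add integrable_inner_L2F)
qed

lemma cost_deviation:
  assumes k: "k < N" and Y: "L2F k Y" and v: "L2F k v"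
  shows "costJ M N A B C D Q R G w k Y
           (\<lambda>l \<omega>. if l = k then v \<omega> else \<Phi> l *v pX A B C D w \<Phi> k Y v (l - k) \<omega>)
       = (\<integral>\<omega>. stage_cost (cost_matrix \<Phi> k (Suc k)) k (Y \<omega>) (v \<omega>) \<partial>M)"
proof -
  let ?X = "pX A B C D w \<Phi> k Y v"
  let ?P = "cost_matrix \<Phi> k (Suc k)"
  define a where "a \<omega> = A k k *v Y \<omega> + B k k *v v \<omega>" for \<omega>
  define b where "b \<omega> = C k k *v Y \<omega> + D k k *v v \<omega>" for \<omega>
  have ab: "L2F k a" "L2F k b"
    unfolding a_def b_def using Y v by (auto intro: L2F_add L2F_matrix_vector_mult)
  have X1: "?X 1 = (\<lambda>\<omega>. a \<omega> + w k \<omega> *\<^sub>R b \<omega>)"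
    unfolding pX_one a_def b_def ..
  have X_Suc: "\<And>j. 1 \<le> j \<Longrightarrow> ?X (Suc j) = feedback_step \<Phi> k (k + j) (?X j)"
    by (simp add: pX_Suc)
  have X_start: "L2F (k + 1) (?X 1)"
    unfolding X1 using L2F_noise_step[OF ab] by simp
  have "(\<Sum>l\<in>{k+1..<N}. \<integral>\<omega>. ?X (l-k) \<omega> \<bullet> (Q k l *v ?X (l-k) \<omega>)
            + (\<Phi> l *v ?X (l-k) \<omega>) \<bullet> (R k l *v (\<Phi> l *v ?X (l-k) \<omega>)) \<partial>M)
        + (\<integral>\<omega>. ?X (N-k) \<omega> \<bullet> (G k *v ?X (N-k) \<omega>) \<partial>M)
      = (\<integral>\<omega>. ?X 1 \<omega> \<bullet> (?P *v ?X 1 \<omega>) \<partial>M)"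
    using closed_loop_cost_to_go[OF X_Suc X_start order_refl] k by simp
  also have "\<dots> = (\<integral>\<omega>. a \<omega> \<bullet> (?P *v a \<omega>) \<partial>M) + (\<integral>\<omega>. b \<omega> \<bullet> (?P *v b \<omega>) \<partial>M)"
    unfolding X1 by (rule integral_quadratic_noise_step[OF ab])
  finally have tail: "(\<Sum>l\<in>{Suc k..<N}. \<integral>\<omega>. ?X (l-k) \<omega> \<bullet> (Q k l *v ?X (l-k) \<omega>)
            + (\<Phi> l *v ?X (l-k) \<omega>) \<bullet> (R k l *v (\<Phi> l *v ?X (l-k) \<omega>)) \<partial>M)
        + (\<integral>\<omega>. ?X (N-k) \<omega> \<bullet> (G k *v ?X (N-k) \<omega>) \<partial>M)
      = (\<integral>\<omega>. a \<omega> \<bullet> (?P *v a \<omega>) \<partial>M) + (\<integral>\<omega>. b \<omega> \<bullet> (?P *v b \<omega>) \<partial>M)"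
    by simp
  have "(\<integral>\<omega>. stage_cost ?P k (Y \<omega>) (v \<omega>) \<partial>M)
      = (\<integral>\<omega>. Y \<omega> \<bullet> (Q k k *v Y \<omega>) + v \<omega> \<bullet> (R k k *v v \<omega>) \<partial>M)
        + (\<integral>\<omega>. a \<omega> \<bullet> (?P *v a \<omega>) \<partial>M) + (\<integral>\<omega>. b \<omega> \<bullet> (?P *v b \<omega>) \<partial>M)"
    using integrable_inner_L2F[OF Y Y, of "Q k k"] integrable_inner_L2F[OF v v, of "R k k"]
      integrable_inner_L2F[OF ab(1) ab(1), of ?P] integrable_inner_L2F[OF ab(2) ab(2), of ?P]
    unfolding stage_cost_def a_def[symmetric] b_def[symmetric]
    by simp
  then show ?thesis
    using k tail by (simp add: costJ_def stateX_pX sum.atLeast_Suc_lessThan)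
qed

lemma cost_feedback:
  assumes k: "k < N" and Y: "L2F k Y"
  shows "costJ M N A B C D Q R G w k Y (\<lambda>l \<omega>. \<Phi> l *v clX A B C D w \<Phi> k Y (l - k) \<omega>)
       = (\<integral>\<omega>. stage_cost (cost_matrix \<Phi> k (Suc k)) k (Y \<omega>) (\<Phi> k *v Y \<omega>) \<partial>M)"
proof -
  \<comment> \<open>following \<open>\<Phi>\<close> at time \<open>k\<close> is the deviation \<open>v = \<Phi>\<^sub>k Y\<close>\<close>
  have "(\<lambda>l \<omega>. \<Phi> l *v clX A B C D w \<Phi> k Y (l - k) \<omega>)
      = (\<lambda>l \<omega>. if l = k then \<Phi> k *v Y \<omega> else \<Phi> l *v pX A B C D w \<Phi> k Y (\<lambda>\<omega>. \<Phi> k *v Y \<omega>) (l - k) \<omega>)"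
    by (simp add: fun_eq_iff clX_eq_pX)
  then show ?thesis
    using cost_deviation[OF k Y L2F_matrix_vector_mult[OF Y]] by simp
qed

section \<open>Existence and uniqueness of the equilibrium\<close>

lemma equilibrium_gain_cong:
  "k < N \<Longrightarrow> (\<And>l. k < l \<Longrightarrow> l < N \<Longrightarrow> \<Phi> l = \<Psi> l) \<Longrightarrow> equilibrium_gain \<Phi> k = equilibrium_gain \<Psi> k"
  unfolding equilibrium_gain_def using cost_matrix_cong[of "Suc k" \<Phi> \<Psi> k] by simp

lemma stage_cost_excess:
  assumes "k < N" and "\<Phi> k = equilibrium_gain \<Phi> k"
  shows "stage_cost (cost_matrix \<Phi> k (Suc k)) k y v - stage_cost (cost_matrix \<Phi> k (Suc k)) k y (\<Phi> k *v y)
    = (v - \<Phi> k *v y) \<bullet> (stage_hessian (cost_matrix \<Phi> k (Suc k)) k *v (v - \<Phi> k *v y))"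
  using assms cost_matrix_symmetric_psd[of k "Suc k" \<Phi>] Q_R_weights[of k k]
  by (intro stage_cost_completion_of_squares equilibrium_gain_first_order) auto

lemma pd_stage_hessian_cost_matrix: "k < N \<Longrightarrow> pd_mat (stage_hessian (cost_matrix \<Phi> k (Suc k)) k)"
  using cost_matrix_symmetric_psd[of k "Suc k" \<Phi>] by (intro stage_hessian_pd) auto

lemma stage_cost_gain_minimal:
  assumes "k < N" and "\<Phi> k = equilibrium_gain \<Phi> k"
  shows "stage_cost (cost_matrix \<Phi> k (Suc k)) k y (\<Phi> k *v y) \<le> stage_cost (cost_matrix \<Phi> k (Suc k)) k y v"
proof -
  have "0 \<le> (v - \<Phi> k *v y) \<bullet> (stage_hessian (cost_matrix \<Phi> k (Suc k)) k *v (v - \<Phi> k *v y))"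
    using pd_imp_psd_mat[OF pd_stage_hessian_cost_matrix[OF assms(1)]] unfolding psd_mat_def by blast
  then show ?thesis using stage_cost_excess[OF assms, of y v] by linarith
qed

lemma stage_cost_gain_unique_minimizer:
  assumes "k < N" and "\<Phi> k = equilibrium_gain \<Phi> k"
    and "stage_cost (cost_matrix \<Phi> k (Suc k)) k y v \<le> stage_cost (cost_matrix \<Phi> k (Suc k)) k y (\<Phi> k *v y)"
  shows "v = \<Phi> k *v y"
proof -
  have "(v - \<Phi> k *v y) \<bullet> (stage_hessian (cost_matrix \<Phi> k (Suc k)) k *v (v - \<Phi> k *v y)) \<le> 0"
    using stage_cost_excess[OF assms(1,2), of y v] assms(3) by linarith
  then have "v - \<Phi> k *v y = 0"
    using pd_stage_hessian_cost_matrix[OF assms(1)] unfolding pd_mat_def by (meson leD)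
  then show ?thesis by simp
qed

lemma gain_fixpoint_is_equilibrium:
  assumes gain: "\<forall>k<N. \<Phi> k = equilibrium_gain \<Phi> k"
  shows "is_equilibrium M N A B C D Q R G x0 w \<Phi>"
  unfolding is_equilibrium_def Let_def
proof (intro allI impI ballI)
  fix t x k and v :: "'w \<Rightarrow> real^'m"
  assume "t < N" and tk: "k \<in> {t..<N}"
    and "v \<in> borel_measurable (Fpre M x0 w k) \<and> integrable M (\<lambda>\<omega>. (norm (v \<omega>))\<^sup>2)"
  then have k: "k < N" and v: "L2F k v"
    unfolding L2F_def by auto
  let ?Y = "eqX A B C D w \<Phi> t x (k - t)"
  have Y: "L2F k ?Y"
    using L2F_eqX[of t "k - t" \<Phi> x] tk by simp
  show "costJ M N A B C D Q R G w k ?Y (\<lambda>l \<omega>. \<Phi> l *v clX A B C D w \<Phi> k ?Y (l - k) \<omega>)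
      \<le> costJ M N A B C D Q R G w k ?Y (\<lambda>l \<omega>. if l = k then v \<omega> else \<Phi> l *v pX A B C D w \<Phi> k ?Y v (l - k) \<omega>)"
    unfolding cost_feedback[OF k Y] cost_deviation[OF k Y v]
  proof (rule integral_mono)
    show "integrable M (\<lambda>\<omega>. stage_cost (cost_matrix \<Phi> k (Suc k)) k (?Y \<omega>) (\<Phi> k *v ?Y \<omega>))"
      by (rule integrable_stage_cost[OF Y L2F_matrix_vector_mult[OF Y]])
    show "integrable M (\<lambda>\<omega>. stage_cost (cost_matrix \<Phi> k (Suc k)) k (?Y \<omega>) (v \<omega>))"
      by (rule integrable_stage_cost[OF Y v])
    show "stage_cost (cost_matrix \<Phi> k (Suc k)) k (?Y \<omega>) (\<Phi> k *v ?Y \<omega>)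
        \<le> stage_cost (cost_matrix \<Phi> k (Suc k)) k (?Y \<omega>) (v \<omega>)" for \<omega>
      using k gain by (intro stage_cost_gain_minimal) auto
  qed
qed

lemma equilibrium_eq_gain_fixpoint_at:
  assumes eq: "is_equilibrium M N A B C D Q R G x0 w \<Psi>" and gain: "\<forall>k<N. \<Phi> k = equilibrium_gain \<Phi> k"
    and t: "t < N" and later: "\<And>l. t < l \<Longrightarrow> l < N \<Longrightarrow> \<Psi> l = \<Phi> l"
  shows "\<Psi> t = \<Phi> t"
proof -
  \<comment> \<open>test the equilibrium condition at \<open>k = t\<close> from the deterministic state \<open>x\<close>
    against the deterministic deviation \<open>\<Phi>\<^sub>t x\<close>\<close>
  have "\<Psi> t *v x = \<Phi> t *v x" for x
  proof -
    let ?v = "\<lambda>_::'w. \<Phi> t *v x"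
    have P: "cost_matrix \<Psi> t (Suc t) = cost_matrix \<Phi> t (Suc t)"
      using later by (intro cost_matrix_cong) auto
    have "costJ M N A B C D Q R G w t (\<lambda>_. x) (\<lambda>l \<omega>. \<Psi> l *v clX A B C D w \<Psi> t (\<lambda>_. x) (l - t) \<omega>)
        \<le> costJ M N A B C D Q R G w t (\<lambda>_. x)
             (\<lambda>l \<omega>. if l = t then ?v \<omega> else \<Psi> l *v pX A B C D w \<Psi> t (\<lambda>_. x) ?v (l - t) \<omega>)"
    proof -
      have tt: "t \<in> {t..<N}" using t by simp
      have v: "?v \<in> borel_measurable (Fpre M x0 w t) \<and> integrable M (\<lambda>\<omega>. (norm (?v \<omega>))\<^sup>2)"
        using L2F_const unfolding L2F_def by blast
      show ?thesis
        using eq[unfolded is_equilibrium_def Let_def, rule_format, where t=t and x=x and k=t and v="?v", OF t tt v]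
        by (simp only: diff_self_eq_0 eqX_0)
    qed
    then have "stage_cost (cost_matrix \<Phi> t (Suc t)) t x (\<Psi> t *v x)
        \<le> stage_cost (cost_matrix \<Phi> t (Suc t)) t x (\<Phi> t *v x)"
      unfolding cost_feedback[OF t L2F_const] cost_deviation[OF t L2F_const L2F_const] P
      by (simp add: prob_space)
    then show ?thesis
      using gain t by (intro stage_cost_gain_unique_minimizer) auto
  qed
  then show ?thesis by (simp add: matrix_eq)
qed

lemma equilibrium_unique:
  assumes "is_equilibrium M N A B C D Q R G x0 w \<Psi>" and "\<forall>k<N. \<Phi> k = equilibrium_gain \<Phi> k"
  shows "\<forall>t<N. \<Psi> t = \<Phi> t"
proof (intro allI impI)
  fix t assume "t < N"
  then show "\<Psi> t = \<Phi> t"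
  proof (induction "N - t" arbitrary: t rule: less_induct)
    case less
    have "\<Psi> l = \<Phi> l" if "t < l" "l < N" for l
      using that by (intro less.hyps) auto
    then show ?case
      by (rule equilibrium_eq_gain_fixpoint_at[OF assms less.prems])
  qed
qed

end

theorem corollary3p1:
  fixes M :: "'w measure" and N :: nat and x0 :: "'w \<Rightarrow> real^'n" and w :: "nat \<Rightarrow> 'w \<Rightarrow> real"
    and A C :: "nat \<Rightarrow> nat \<Rightarrow> real^'n^'n" and B D :: "nat \<Rightarrow> nat \<Rightarrow> real^'m^'n"
    and Q :: "nat \<Rightarrow> nat \<Rightarrow> real^'n^'n" and R :: "nat \<Rightarrow> nat \<Rightarrow> real^'m^'m"
    and G :: "nat \<Rightarrow> real^'n^'n"
  assumes "prob_space M" and "0 < N"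
    and "x0 \<in> borel_measurable M"
    and "\<forall>k. w k \<in> borel_measurable M"
    and "\<forall>k. integrable M (w k)"
    and "\<forall>k. integrable M (\<lambda>\<omega>. (w k \<omega>)\<^sup>2)"
    and "\<forall>k. AE \<omega> in M. real_cond_exp M (Fpre M x0 w k) (w k) \<omega> = 0"
    and "\<forall>k. AE \<omega> in M. real_cond_exp M (Fpre M x0 w k) (\<lambda>\<omega>. (w k \<omega>)\<^sup>2) \<omega> = 1"
    and "\<forall>t<N. \<forall>k\<in>{t..<N}. transpose (Q t k) = Q t k \<and> transpose (R t k) = R t k
                            \<and> psd_mat (Q t k) \<and> pd_mat (R t k)"
    and "\<forall>t<N. transpose (G t) = G t \<and> psd_mat (G t)"
  shows "\<exists>\<Phi>. is_equilibrium M N A B C D Q R G x0 w \<Phi> \<and>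
             (\<forall>\<Psi>. is_equilibrium M N A B C D Q R G x0 w \<Psi> \<longrightarrow> (\<forall>t<N. \<Psi> t = \<Phi> t))"
proof -
  interpret lq_problem M x0 w N A C B D Q R G
    using assms(1,3,4,6-10)
    unfolding lq_problem_def lq_problem_axioms_def noise_filtration_def noise_filtration_axioms_def
    by auto
  obtain \<Phi> where gain: "\<forall>k<N. \<Phi> k = equilibrium_gain \<Phi> k"
    using backward_fixpoint_exists[of N equilibrium_gain] equilibrium_gain_cong by blast
  show ?thesis
    using gain_fixpoint_is_equilibrium[OF gain] equilibrium_unique[OF _ gain] by blast
qed

end
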